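(* Let $\mathcal R=\{\rho(x)x:x\in\bar\Omega\}$ be a near field refractor (in either case $\kappa<-1$ or $-1<\kappa<0$) and let $P\in\bar D$. Then $\mathcal T_{\mathcal R}(P)$ is a closed subset of $\bar\Omega$.
   Context: $\Omega\subset S^{n-1}$ domain with $|\partial\Omega|=0$; $D\subset\mathbb R^n$ in an $(n-1)$-dimensional hypersurface, $\bar D$ compact, $0\notin\bar D$. Case $\kappa<-1$: there is $\tau\in(0,1-\frac1\kappa)$ with $\inf_{x\in\bar\Omega,P\in\bar D}x\cdot\frac P{|P|}\ge\tau+\frac1\kappa$; $r_0\in(0,\frac{\tau^2\kappa^2}{(1+\sqrt2)^2(1-\kappa)^2}\inf_{\bar D}|P|)$; $h(x,P,b)=\frac{(\kappa^2x\cdot P-b)-\sqrt{(\kappa^2x\cdot P-b)^2-(\kappa^2-1)(\kappa^2|P|^2-b^2)}}{\kappa^2-1}$, $I(P,b)=\frac{b+\sqrt{(\kappa^2-1)(\kappa^2|P|^2-b^2)}}{\kappa^2|P|}$, $\Gamma(P,b)=\{h(x,P,b)x:x\cdot P\ge I(P,b)|P|\}$. Near field refractor: $\mathcal R=\{\rho(x)x\}\subset\mathcal C_{r_0}=\{tx:x\in\bar\Omega,0<t\le r_0\}$ such that for each $x_0\in\bar\Omega$ there are $P\in\bar D$, $b\in(\kappa|P|,|P|)$ with $\rho\ge h(\cdot,P,b)$ on $\bar\Omega$, $\rho(x_0)=h(x_0,P,b)$, $\bar\Omega\subset\{x:x\cdot\frac P{|P|}\ge I(P,b)\}$ ("$\Gamma(P,b)$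 supports $\mathcal R$ at $\rho(x_0)x_0$"). Case $-1<\kappa<0$: there is $\tau\in(0,1+\kappa)$ with $x\cdot P\ge(\tau-\kappa)|P|$ on $\bar\Omega\times\bar D$; $r_0\in(0,\frac\tau{1-\kappa}\operatorname{dist}(0,\bar D))$; $h(x,P,b)=\frac{(b-\kappa^2x\cdot P)+\sqrt{(b-\kappa^2x\cdot P)^2-(1-\kappa^2)(b^2-\kappa^2|P|^2)}}{1-\kappa^2}$, $\mathcal O(P,b)=\{h(x,P,b)x:x\cdot P\ge b\}$. Near field refractor: $\mathcal R\subset\mathcal C_{r_0}$ such that for each $x_0$ there are $P\in\bar D$, $b\in(\kappa|P|,|P|)$ with $\rho\le h(\cdot,P,b)$ on $\bar\Omega$ and $\rho(x_0)=h(x_0,P,b)$ ("$\mathcal O(P,b)$ supports $\mathcal R$ at $\rho(x_0)x_0$"). In both cases for all $m\in S^{n-1}$, $x\in\mathcal C_{r_0}$, $\bar D\cap\{x+tm:t\ge0\}$ has at most one point. $\mathcal N_{\mathcal R}(x)=\{P\in\bar D:$ some oval with focus data $(P,b)$ supports $\mathcal R$ at $\rho(x)x\}$; $\mathcal T_{\mathcal R}(P)=\{x\in\bar\Omega:P\in\mathcal N_{\mathcal R}(x)\}$. *)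

theory Defs
  imports "HOL-Analysis.Analysis"
begin

definition sphere_domain :: "'a::euclidean_space set \<Rightarrow> bool" where
  "sphere_domain \<Omega> \<longleftrightarrow> \<Omega> \<noteq> {} \<and> connected \<Omega> \<and>
     openin (top_of_set (sphere 0 1)) \<Omega>"

text \<open>Surface measure of the (relative) boundary of Omega in the sphere is zero,
  expressed via the cone over it: sigma(E) = n * Lebesgue measure of {t x : x in E, 0<t<=1}.\<close>
definition sphere_boundary_null :: "'a::euclidean_space set \<Rightarrow> bool" where
  "sphere_boundary_null \<Omega> \<longleftrightarrow>
     {t *\<^sub>R x | t x. 0 < t \<and> t \<le> 1 \<and> x \<in> closure \<Omega> - \<Omega>} \<in> null_sets lebesgue"

definition cone_r :: "'a::euclidean_space set \<Rightarrow> real \<Rightarrow> 'a set" where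
  "cone_r \<Omega> r0 = {t *\<^sub>R x | t x. x \<in> closure \<Omega> \<and> 0 < t \<and> t \<le> r0}"

definition ray_unique :: "'a::euclidean_space set \<Rightarrow> 'a set \<Rightarrow> real \<Rightarrow> bool" where
  "ray_unique \<Omega> D r0 \<longleftrightarrow> (\<forall>m \<in> sphere 0 1. \<forall>x \<in> cone_r \<Omega> r0.
      \<forall>Q1 Q2. Q1 \<in> closure D \<inter> {x + t *\<^sub>R m | t. t \<ge> 0} \<longrightarrow>
              Q2 \<in> closure D \<inter> {x + t *\<^sub>R m | t. t \<ge> 0} \<longrightarrow> Q1 = Q2)"

definition h1 :: "real \<Rightarrow> 'a::euclidean_space \<Rightarrow> 'a \<Rightarrow> real \<Rightarrow> real" where
  "h1 \<kappa> x P b = ((\<kappa>\<^sup>2 * (x \<bullet> P) - b)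
      - sqrt ((\<kappa>\<^sup>2 * (x \<bullet> P) - b)\<^sup>2 - (\<kappa>\<^sup>2 - 1) * (\<kappa>\<^sup>2 * (norm P)\<^sup>2 - b\<^sup>2))) / (\<kappa>\<^sup>2 - 1)"

definition I1 :: "real \<Rightarrow> 'a::euclidean_space \<Rightarrow> real \<Rightarrow> real" where
  "I1 \<kappa> P b = (b + sqrt ((\<kappa>\<^sup>2 - 1) * (\<kappa>\<^sup>2 * (norm P)\<^sup>2 - b\<^sup>2))) / (\<kappa>\<^sup>2 * norm P)"

definition supports1 :: "real \<Rightarrow> 'a::euclidean_space set \<Rightarrow> ('a \<Rightarrow> real) \<Rightarrow> 'a \<Rightarrow> real \<Rightarrow> 'a \<Rightarrow> bool" where
  "supports1 \<kappa> \<Omega> \<rho> P b x0 \<longleftrightarrow> \<kappa> * norm P < b \<and> b < norm P \<and>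
     (\<forall>x \<in> closure \<Omega>. \<rho> x \<ge> h1 \<kappa> x P b) \<and> \<rho> x0 = h1 \<kappa> x0 P b \<and>
     (\<forall>x \<in> closure \<Omega>. x \<bullet> (P /\<^sub>R norm P) \<ge> I1 \<kappa> P b)"

definition setting1 :: "real \<Rightarrow> 'a::euclidean_space set \<Rightarrow> 'a set \<Rightarrow> real \<Rightarrow> bool" where
  "setting1 \<kappa> \<Omega> D r0 \<longleftrightarrow> \<kappa> < -1 \<and>
     (\<exists>\<tau>. 0 < \<tau> \<and> \<tau> < 1 - 1/\<kappa> \<and>
        (INF z \<in> closure \<Omega> \<times> closure D. fst z \<bullet> (snd z /\<^sub>R norm (snd z))) \<ge> \<tau> + 1/\<kappa> \<and>
        0 < r0 \<and> r0 < \<tau>\<^sup>2 * \<kappa>\<^sup>2 / ((1 + sqrt 2)\<^sup>2 * (1 - \<kappa>)\<^sup>2) * (INF P \<in> closure D. norm P))"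

definition refractor1 :: "real \<Rightarrow> 'a::euclidean_space set \<Rightarrow> 'a set \<Rightarrow> real \<Rightarrow> ('a \<Rightarrow> real) \<Rightarrow> bool" where
  "refractor1 \<kappa> \<Omega> D r0 \<rho> \<longleftrightarrow>
     (\<forall>x \<in> closure \<Omega>. \<rho> x *\<^sub>R x \<in> cone_r \<Omega> r0) \<and>
     (\<forall>x0 \<in> closure \<Omega>. \<exists>P \<in> closure D. \<exists>b. supports1 \<kappa> \<Omega> \<rho> P b x0)"

definition h2 :: "real \<Rightarrow> 'a::euclidean_space \<Rightarrow> 'a \<Rightarrow> real \<Rightarrow> real" where
  "h2 \<kappa> x P b = ((b - \<kappa>\<^sup>2 * (x \<bullet> P))
      + sqrt ((b - \<kappa>\<^sup>2 * (x \<bullet> P))\<^sup>2 - (1 - \<kappa>\<^sup>2) * (b\<^sup>2 - \<kappa>\<^sup>2 * (norm P)\<^sup>2))) / (1 - \<kappa>\<^sup>2)"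

definition supports2 :: "real \<Rightarrow> 'a::euclidean_space set \<Rightarrow> ('a \<Rightarrow> real) \<Rightarrow> 'a \<Rightarrow> real \<Rightarrow> 'a \<Rightarrow> bool" where
  "supports2 \<kappa> \<Omega> \<rho> P b x0 \<longleftrightarrow> \<kappa> * norm P < b \<and> b < norm P \<and>
     (\<forall>x \<in> closure \<Omega>. \<rho> x \<le> h2 \<kappa> x P b) \<and> \<rho> x0 = h2 \<kappa> x0 P b"

definition setting2 :: "real \<Rightarrow> 'a::euclidean_space set \<Rightarrow> 'a set \<Rightarrow> real \<Rightarrow> bool" where
  "setting2 \<kappa> \<Omega> D r0 \<longleftrightarrow> -1 < \<kappa> \<and> \<kappa> < 0 \<and>
     (\<exists>\<tau>. 0 < \<tau> \<and> \<tau> < 1 + \<kappa> \<and>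
        (\<forall>x \<in> closure \<Omega>. \<forall>P \<in> closure D. x \<bullet> P \<ge> (\<tau> - \<kappa>) * norm P) \<and>
        0 < r0 \<and> r0 < \<tau> / (1 - \<kappa>) * setdist {0} (closure D))"

definition refractor2 :: "real \<Rightarrow> 'a::euclidean_space set \<Rightarrow> 'a set \<Rightarrow> real \<Rightarrow> ('a \<Rightarrow> real) \<Rightarrow> bool" where
  "refractor2 \<kappa> \<Omega> D r0 \<rho> \<longleftrightarrow>
     (\<forall>x \<in> closure \<Omega>. \<rho> x *\<^sub>R x \<in> cone_r \<Omega> r0) \<and>
     (\<forall>x0 \<in> closure \<Omega>. \<exists>P \<in> closure D. \<exists>b. supports2 \<kappa> \<Omega> \<rho> P b x0)"

definition supports :: "real \<Rightarrow> 'a::euclidean_space set \<Rightarrow> ('a \<Rightarrow> real) \<Rightarrow> 'a \<Rightarrow> real \<Rightarrow> 'a \<Rightarrow> bool" where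
  "supports \<kappa> \<Omega> \<rho> P b x0 = (if \<kappa> < -1 then supports1 \<kappa> \<Omega> \<rho> P b x0 else supports2 \<kappa> \<Omega> \<rho> P b x0)"

definition normal_map :: "real \<Rightarrow> 'a::euclidean_space set \<Rightarrow> 'a set \<Rightarrow> ('a \<Rightarrow> real) \<Rightarrow> 'a \<Rightarrow> 'a set" where
  "normal_map \<kappa> \<Omega> D \<rho> x = {P \<in> closure D. \<exists>b. supports \<kappa> \<Omega> \<rho> P b x}"

definition trace_map :: "real \<Rightarrow> 'a::euclidean_space set \<Rightarrow> 'a set \<Rightarrow> ('a \<Rightarrow> real) \<Rightarrow> 'a \<Rightarrow> 'a set" where
  "trace_map \<kappa> \<Omega> D \<rho> P = {x \<in> closure \<Omega>. P \<in> normal_map \<kappa> \<Omega> D \<rho> x}"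

end

theory Submission
  imports Defs
begin

(* Let x_k \<rightarrow> x with x_k \<in> T(P), supported by ovals with parameters b_k. A subsequence of b_k
   converges to some b in the compact range [\<kappa>|P|, |P|], and since the ovals depend continuously
   on (x, b), the limit oval lies on the correct side of \<rho>; it touches \<rho> at x because \<rho> is
   itself supported at x by some oval, which makes \<rho> semicontinuous there. Finally b is not an
   endpoint of the range: the oval with b = \<kappa>|P| degenerates to radius 0, and the one with
   b = |P| reaches distance |P| > r0 in direction x, whereas 0 < |\<rho>| \<le> r0. *)

lemma closed_touching_set:
  fixes f :: "'a::metric_space \<Rightarrow> 'b::metric_space \<Rightarrow> real" and \<rho> :: "'a \<Rightarrow> real"
  assumes "closed K" and "compact B"
    and f_cont: "continuous_on (K \<times> B) (\<lambda>(x, b). f x b)"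
    and touched: "\<And>x. x \<in> K \<Longrightarrow> \<exists>g. continuous_on K g \<and> (\<forall>y\<in>K. g y \<le> \<rho> y) \<and> g x = \<rho> x"
  shows "closed {x \<in> K. \<exists>b\<in>B. (\<forall>y\<in>K. f y b \<le> \<rho> y) \<and> \<rho> x = f x b}"
  unfolding closed_sequential_limits
proof (intro allI impI, elim conjE)
  fix xs x
  assume xs: "\<forall>n. xs n \<in> {x \<in> K. \<exists>b\<in>B. (\<forall>y\<in>K. f y b \<le> \<rho> y) \<and> \<rho> x = f x b}"
    and lim: "xs \<longlonglongrightarrow> x"
  have xs_K: "\<And>n. xs n \<in> K" using xs by blast
  have x_K: "x \<in> K" using closed_sequentially[OF \<open>closed K\<close> _ lim] xs_K by blast
  have "\<forall>n. \<exists>b. b \<in> B \<and> (\<forall>y\<in>K. f y b \<le> \<rho> y) \<and> \<rho> (xs n) = f (xs n) b"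
    using xs by blast
  then obtain bs where bs: "\<forall>n. bs n \<in> B \<and> (\<forall>y\<in>K. f y (bs n) \<le> \<rho> y) \<and> \<rho> (xs n) = f (xs n) (bs n)"
    by metis
  have bs_B: "\<forall>n. bs n \<in> B"
    and bs_below: "\<And>n y. y \<in> K \<Longrightarrow> f y (bs n) \<le> \<rho> y"
    and bs_touch: "\<And>n. \<rho> (xs n) = f (xs n) (bs n)"
    using bs by auto
  obtain b r where b: "b \<in> B" and r: "strict_mono r" and b_lim: "(bs \<circ> r) \<longlonglongrightarrow> b"
    using seq_compactE[OF compact_imp_seq_compact[OF \<open>compact B\<close>] bs_B] by metis
  have f_lim: "(\<lambda>n. f (ys n) ((bs \<circ> r) n)) \<longlonglongrightarrow> f y b"
    if "ys \<longlonglongrightarrow> y" "y \<in> K" "\<And>n. ys n \<in> K" for ys y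
    using continuous_on_tendsto_compose[OF f_cont tendsto_Pair[OF that(1) b_lim]] that(2,3) b bs_B
    by auto
  have below: "f y b \<le> \<rho> y" if "y \<in> K" for y
    using f_lim[OF tendsto_const that that]
    by (rule LIMSEQ_le_const2) (use bs_below that in auto)
  obtain g where g: "continuous_on K g" "\<forall>y\<in>K. g y \<le> \<rho> y" "g x = \<rho> x"
    using touched[OF x_K] by blast
  have x_lim: "(xs \<circ> r) \<longlonglongrightarrow> x"
    using LIMSEQ_subseq_LIMSEQ[OF lim r] .
  have "\<rho> x \<le> f x b"
    \<comment> \<open>\<open>g\<close> makes \<open>\<rho>\<close> lower semicontinuous at \<open>x\<close>\<close>
  proof (rule LIMSEQ_le)
    show "(\<lambda>n. g ((xs \<circ> r) n)) \<longlonglongrightarrow> \<rho> x"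
      using continuous_on_tendsto_compose[OF g(1) x_lim x_K] xs_K g(3) by simp
    show "(\<lambda>n. f ((xs \<circ> r) n) ((bs \<circ> r) n)) \<longlonglongrightarrow> f x b"
      using f_lim[OF x_lim x_K] xs_K by simp
    show "\<exists>N. \<forall>n\<ge>N. g ((xs \<circ> r) n) \<le> f ((xs \<circ> r) n) ((bs \<circ> r) n)"
      using g(2) xs_K bs_touch by (metis comp_apply)
  qed
  then show "x \<in> {x \<in> K. \<exists>b\<in>B. (\<forall>y\<in>K. f y b \<le> \<rho> y) \<and> \<rho> x = f x b}"
    using x_K b below by force
qed

lemma closure_subset_sphere:
  assumes "sphere_domain \<Omega>"
  shows "closure \<Omega> \<subseteq> sphere (0::'a::euclidean_space) 1"
proof -
  have "\<Omega> \<subseteq> sphere 0 1"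
    using assms unfolding sphere_domain_def by (metis openin_subset topspace_euclidean_subtopology)
  then show ?thesis by (simp add: closure_minimal)
qed

lemma scaleR_mem_cone_r:
  assumes "c *\<^sub>R x \<in> cone_r \<Omega> r0" and "closure \<Omega> \<subseteq> sphere 0 1" and "norm x = 1"
  shows "0 < \<bar>c\<bar> \<and> \<bar>c\<bar> \<le> r0"
proof -
  obtain t y where eq: "c *\<^sub>R x = t *\<^sub>R y" and "y \<in> closure \<Omega>" and t: "0 < t" "t \<le> r0"
    using assms(1) unfolding cone_r_def by blast
  then have "norm y = 1" using assms(2) by auto
  then have "\<bar>c\<bar> = t"
    using arg_cong[OF eq, of norm] assms(3) t by simp
  with t show ?thesis by simp
qed

lemma continuous_on_h1 [continuous_intros]:
  "continuous_on S f \<Longrightarrow> continuous_on S g \<Longrightarrow> continuous_on S (\<lambda>z. h1 \<kappa> (f z) P (g z))"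
  unfolding h1_def divide_inverse by (intro continuous_intros)

lemma continuous_on_h2 [continuous_intros]:
  "continuous_on S f \<Longrightarrow> continuous_on S g \<Longrightarrow> continuous_on S (\<lambda>z. h2 \<kappa> (f z) P (g z))"
  unfolding h2_def divide_inverse by (intro continuous_intros)

lemma continuous_on_I1 [continuous_intros]:
  "continuous_on S g \<Longrightarrow> continuous_on S (\<lambda>z. I1 \<kappa> P (g z))"
  unfolding I1_def divide_inverse by (intro continuous_intros)

lemma h1_lower_endpoint:
  assumes "0 \<le> \<kappa>\<^sup>2 * (x \<bullet> P) - \<kappa> * norm P"
  shows "h1 \<kappa> x P (\<kappa> * norm P) = 0"
  unfolding h1_def power_mult_distrib using assms by simp

lemma h2_lower_endpoint:
  assumes "0 \<le> \<kappa>\<^sup>2 * (x \<bullet> P) - \<kappa> * norm P"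
  shows "h2 \<kappa> x P (\<kappa> * norm P) = 0"
  unfolding h2_def power_mult_distrib using assms by simp

lemma h1_upper_endpoint:
  assumes "x \<bullet> P = norm P" and "\<kappa>\<^sup>2 \<noteq> 1"
  shows "h1 \<kappa> x P (norm P) = norm P"
proof -
  have "(\<kappa>\<^sup>2 * norm P - norm P)\<^sup>2 - (\<kappa>\<^sup>2 - 1) * (\<kappa>\<^sup>2 * (norm P)\<^sup>2 - (norm P)\<^sup>2) = 0"
    by (simp add: power2_eq_square algebra_simps)
  then show ?thesis
    unfolding h1_def assms(1) using assms(2) by (simp add: field_simps)
qed

lemma I1_upper_endpoint:
  assumes "1 < \<kappa>\<^sup>2" and "P \<noteq> 0"
  shows "I1 \<kappa> P (norm P) = 1"
proof -
  have "(\<kappa>\<^sup>2 - 1) * (\<kappa>\<^sup>2 * (norm P)\<^sup>2 - (norm P)\<^sup>2) = ((\<kappa>\<^sup>2 - 1) * norm P)\<^sup>2"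
    by (simp add: power2_eq_square algebra_simps)
  then have "sqrt ((\<kappa>\<^sup>2 - 1) * (\<kappa>\<^sup>2 * (norm P)\<^sup>2 - (norm P)\<^sup>2)) = (\<kappa>\<^sup>2 - 1) * norm P"
    using assms(1) by simp
  moreover have "\<kappa> \<noteq> 0"
    using assms(1) by auto
  ultimately show ?thesis
    unfolding I1_def using assms(2) by (simp add: field_simps)
qed

lemma h2_upper_endpoint_ge:
  assumes "\<kappa>\<^sup>2 < 1" and "x \<bullet> P \<le> norm P"
  shows "norm P \<le> h2 \<kappa> x P (norm P)"
proof -
  define A where "A = norm P - \<kappa>\<^sup>2 * (x \<bullet> P)"
  have "\<kappa>\<^sup>2 * (x \<bullet> P) \<le> \<kappa>\<^sup>2 * norm P"
    using assms(2) by (simp add: mult_left_mono)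
  then have A_ge: "(1 - \<kappa>\<^sup>2) * norm P \<le> A"
    unfolding A_def by (simp add: algebra_simps)
  have "((1 - \<kappa>\<^sup>2) * norm P)\<^sup>2 \<le> A\<^sup>2"
    using A_ge assms(1) by (intro power_mono) auto
  \<comment> \<open>the discriminant is nonnegative; \<open>sqrt\<close> is negative on negative reals\<close>
  then have "0 \<le> A\<^sup>2 - (1 - \<kappa>\<^sup>2) * ((norm P)\<^sup>2 - \<kappa>\<^sup>2 * (norm P)\<^sup>2)"
    by (simp add: power2_eq_square algebra_simps)
  then have "A \<le> A + sqrt (A\<^sup>2 - (1 - \<kappa>\<^sup>2) * ((norm P)\<^sup>2 - \<kappa>\<^sup>2 * (norm P)\<^sup>2))"
    by simp
  then have "A / (1 - \<kappa>\<^sup>2) \<le> h2 \<kappa> x P (norm P)"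
    unfolding h2_def A_def using assms(1) by (simp add: divide_right_mono)
  moreover have "norm P \<le> A / (1 - \<kappa>\<^sup>2)"
    using A_ge assms(1) by (simp add: field_simps)
  ultimately show ?thesis by linarith
qed

lemma setting1_inner_gt:
  assumes "setting1 \<kappa> \<Omega> D r0" and "closure \<Omega> \<subseteq> sphere 0 1"
    and "x \<in> closure \<Omega>" and "P \<in> closure D"
  shows "1 / \<kappa> < x \<bullet> (P /\<^sub>R norm P)"
proof -
  obtain \<tau> where "0 < \<tau>"
    and inf: "\<tau> + 1 / \<kappa> \<le> (INF z \<in> closure \<Omega> \<times> closure D. fst z \<bullet> (snd z /\<^sub>R norm (snd z)))"
    using assms(1) unfolding setting1_def by blast
  have "bdd_below ((\<lambda>z. fst z \<bullet> (snd z /\<^sub>R norm (snd z))) ` (closure \<Omega> \<times> closure D))"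
  proof (rule bdd_belowI2)
    fix z assume "z \<in> closure \<Omega> \<times> closure D"
    then have "norm (fst z) = 1" using assms(2) by auto
    moreover have "norm (snd z /\<^sub>R norm (snd z)) \<le> 1"
      by (cases "snd z = 0") auto
    ultimately show "- 1 \<le> fst z \<bullet> (snd z /\<^sub>R norm (snd z))"
      using Cauchy_Schwarz_ineq2[of "fst z" "snd z /\<^sub>R norm (snd z)"] by auto
  qed
  then have "(INF z \<in> closure \<Omega> \<times> closure D. fst z \<bullet> (snd z /\<^sub>R norm (snd z))) \<le> x \<bullet> (P /\<^sub>R norm P)"
    using assms(3,4) by (intro cINF_lower2[where x = "(x, P)"]) auto
  with inf \<open>0 < \<tau>\<close> show ?thesis by linarith
qed

lemma setting1_radius_less_norm:
  assumes "setting1 \<kappa> \<Omega> D r0" and "P \<in> closure D"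
  shows "r0 < norm P"
proof -
  obtain \<tau> where \<kappa>: "\<kappa> < -1" and \<tau>: "0 < \<tau>" "\<tau> < 1 - 1 / \<kappa>"
    and r0: "r0 < \<tau>\<^sup>2 * \<kappa>\<^sup>2 / ((1 + sqrt 2)\<^sup>2 * (1 - \<kappa>)\<^sup>2) * (INF Q \<in> closure D. norm Q)"
    using assms(1) unfolding setting1_def by blast
  define c where "c = \<tau>\<^sup>2 * \<kappa>\<^sup>2 / ((1 + sqrt 2)\<^sup>2 * (1 - \<kappa>)\<^sup>2)"
  define d where "d = (INF Q \<in> closure D. norm Q)"
  have "- \<kappa> * \<tau> < 1 - \<kappa>"
    using \<tau> \<kappa> by (simp add: field_simps)
  then have "(- \<kappa> * \<tau>)\<^sup>2 < (1 - \<kappa>)\<^sup>2"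
    using \<tau> \<kappa> by (intro power_strict_mono) (auto simp: mult_nonpos_nonneg)
  also have "\<dots> \<le> (1 + sqrt 2)\<^sup>2 * (1 - \<kappa>)\<^sup>2"
    using mult_right_mono[of 1 "(1 + sqrt 2)\<^sup>2" "(1 - \<kappa>)\<^sup>2"] by simp
  finally have "\<tau>\<^sup>2 * \<kappa>\<^sup>2 < (1 + sqrt 2)\<^sup>2 * (1 - \<kappa>)\<^sup>2"
    by (simp add: power_mult_distrib mult.commute)
  moreover have "0 < (1 + sqrt 2)\<^sup>2 * (1 - \<kappa>)\<^sup>2"
    using \<kappa> add_pos_nonneg[OF zero_less_one real_sqrt_ge_zero[of 2]] by simp
  ultimately have "c < 1"
    unfolding c_def by (simp add: divide_less_eq)
  moreover have "0 \<le> d"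
    unfolding d_def using assms(2) by (intro cINF_greatest) auto
  moreover have "d \<le> norm P"
    unfolding d_def using assms(2) by (intro cINF_lower) (auto intro: bdd_belowI2[where m = 0])
  ultimately show ?thesis
    using r0 mult_right_mono[of c 1 d] unfolding c_def d_def by linarith
qed

lemma setting2_inner_nonneg:
  assumes "setting2 \<kappa> \<Omega> D r0" and "x \<in> closure \<Omega>" and "P \<in> closure D"
  shows "0 \<le> x \<bullet> P"
proof -
  obtain \<tau> where "0 < \<tau>" "\<kappa> < 0" and lower: "(\<tau> - \<kappa>) * norm P \<le> x \<bullet> P"
    using assms unfolding setting2_def by blast
  then have "0 \<le> (\<tau> - \<kappa>) * norm P"
    by simp
  with lower show ?thesis
    by linarith
qed

lemma setting2_radius_less_norm:
  assumes "setting2 \<kappa> \<Omega> D r0" and "P \<in> closure D"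
  shows "r0 < norm P"
proof -
  obtain \<tau> where "\<kappa> < 0" "\<tau> < 1 + \<kappa>" and r0: "r0 < \<tau> / (1 - \<kappa>) * setdist {0} (closure D)"
    using assms(1) unfolding setting2_def by blast
  then have "\<tau> / (1 - \<kappa>) < 1"
    by (simp add: field_simps)
  moreover have "setdist {0} (closure D) \<le> norm P"
    using setdist_le_dist[of 0 "{0}" P "closure D"] assms(2) by simp
  ultimately show ?thesis
    using r0 setdist_pos_le[of "{0}" "closure D"]
      mult_right_mono[of "\<tau> / (1 - \<kappa>)" 1 "setdist {0} (closure D)"] by linarith
qed

lemma supports1_iff_closed_range:
  assumes \<kappa>: "\<kappa> < -1" and "P \<noteq> 0" and x: "x \<in> closure \<Omega>" "norm x = 1"
    and inner: "1 / \<kappa> < x \<bullet> (P /\<^sub>R norm P)"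
    and radius: "\<rho> x \<noteq> 0" "\<bar>\<rho> x\<bar> < norm P"
  shows "supports1 \<kappa> \<Omega> \<rho> P b x \<longleftrightarrow>
    b \<in> {\<kappa> * norm P..norm P} \<and> (\<forall>y\<in>closure \<Omega>. I1 \<kappa> P b \<le> y \<bullet> (P /\<^sub>R norm P)) \<and>
    (\<forall>y\<in>closure \<Omega>. h1 \<kappa> y P b \<le> \<rho> y) \<and> \<rho> x = h1 \<kappa> x P b"
    (is "_ \<longleftrightarrow> ?closed_range")
proof
  assume ?closed_range
  have nP: "0 < norm P"
    using \<open>P \<noteq> 0\<close> by simp
  have "b \<noteq> \<kappa> * norm P"
  proof
    assume b: "b = \<kappa> * norm P"
    have "norm P / \<kappa> < x \<bullet> P"
      using inner nP by (simp add: field_simps)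
    then have "\<kappa> * (x \<bullet> P) < norm P"
      using \<kappa> by (simp add: field_simps)
    then have "0 \<le> \<kappa>\<^sup>2 * (x \<bullet> P) - \<kappa> * norm P"
      using \<kappa> mult_left_mono_neg[of "\<kappa> * (x \<bullet> P)" "norm P" \<kappa>]
      by (simp add: power2_eq_square algebra_simps)
    then have "h1 \<kappa> x P b = 0"
      unfolding b by (rule h1_lower_endpoint)
    then show False
      using \<open>?closed_range\<close> radius(1) by simp
  qed
  moreover have "b \<noteq> norm P"
  proof
    assume b: "b = norm P"
    have "1 * 1 < (- \<kappa>) * (- \<kappa>)"
      using \<kappa> by (intro mult_strict_mono) auto
    then have \<kappa>2: "1 < \<kappa>\<^sup>2"
      by (simp add: power2_eq_square)
    then have "I1 \<kappa> P b = 1"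
      unfolding b using \<open>P \<noteq> 0\<close> by (rule I1_upper_endpoint)
    then have "1 \<le> x \<bullet> (P /\<^sub>R norm P)"
      using \<open>?closed_range\<close> x(1) by auto
    then have "norm P \<le> x \<bullet> P"
      using nP by (simp add: field_simps)
    moreover have "x \<bullet> P \<le> norm P"
      using norm_cauchy_schwarz[of x P] x(2) by simp
    ultimately have "h1 \<kappa> x P b = norm P"
      using h1_upper_endpoint[of x P \<kappa>] \<kappa>2 b by simp
    then show False
      using \<open>?closed_range\<close> radius(2) by simp
  qed
  ultimately show "supports1 \<kappa> \<Omega> \<rho> P b x"
    using \<open>?closed_range\<close> unfolding supports1_def by auto
qed (auto simp: supports1_def)

lemma supports2_iff_closed_range:
  assumes \<kappa>: "-1 < \<kappa>" "\<kappa> < 0" and x: "norm x = 1" "0 \<le> x \<bullet> P"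
    and radius: "\<rho> x \<noteq> 0" "\<bar>\<rho> x\<bar> < norm P"
  shows "supports2 \<kappa> \<Omega> \<rho> P b x \<longleftrightarrow>
    b \<in> {\<kappa> * norm P..norm P} \<and> (\<forall>y\<in>closure \<Omega>. \<rho> y \<le> h2 \<kappa> y P b) \<and> \<rho> x = h2 \<kappa> x P b"
    (is "_ \<longleftrightarrow> ?closed_range")
proof
  assume ?closed_range
  have "b \<noteq> \<kappa> * norm P"
  proof
    assume b: "b = \<kappa> * norm P"
    have "\<kappa> * norm P \<le> 0" "0 \<le> \<kappa>\<^sup>2 * (x \<bullet> P)"
      using \<kappa> x(2) by (simp_all add: mult_nonpos_nonneg)
    then have "0 \<le> \<kappa>\<^sup>2 * (x \<bullet> P) - \<kappa> * norm P"
      by linarith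
    then have "h2 \<kappa> x P b = 0"
      unfolding b by (rule h2_lower_endpoint)
    then show False
      using \<open>?closed_range\<close> radius(1) by simp
  qed
  moreover have "b \<noteq> norm P"
  proof
    assume b: "b = norm P"
    have "\<kappa>\<^sup>2 < 1"
      using \<kappa> by (simp add: abs_square_less_1)
    moreover have "x \<bullet> P \<le> norm P"
      using norm_cauchy_schwarz[of x P] x(1) by simp
    ultimately have "norm P \<le> h2 \<kappa> x P b"
      using h2_upper_endpoint_ge b by blast
    then show False
      using \<open>?closed_range\<close> radius(2) by simp
  qed
  ultimately show "supports2 \<kappa> \<Omega> \<rho> P b x"
    using \<open>?closed_range\<close> unfolding supports2_def by auto
qed (auto simp: supports2_def)

lemma closed_trace_map1:
  fixes \<Omega> D :: "'a::euclidean_space set"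
  assumes S: "setting1 \<kappa> \<Omega> D r0" and R: "refractor1 \<kappa> \<Omega> D r0 \<rho>"
    and sphere: "closure \<Omega> \<subseteq> sphere 0 1" and P: "P \<in> closure D" "0 \<notin> closure D"
  shows "closed (trace_map \<kappa> \<Omega> D \<rho> P)"
proof -
  define K where "K = closure \<Omega>"
  define B where "B = {\<kappa> * norm P..norm P} \<inter> (\<Inter>y\<in>K. {b. I1 \<kappa> P b \<le> y \<bullet> (P /\<^sub>R norm P)})"
  have \<kappa>: "\<kappa> < -1"
    using S by (simp add: setting1_def)
  have "P \<noteq> 0"
    using P by auto
  have "supports1 \<kappa> \<Omega> \<rho> P b x \<longleftrightarrow> b \<in> B \<and> (\<forall>y\<in>K. h1 \<kappa> y P b \<le> \<rho> y) \<and> \<rho> x = h1 \<kappa> x P b"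
    if x: "x \<in> K" for x b
  proof -
    have "norm x = 1"
      using x sphere unfolding K_def by auto
    then have "0 < \<bar>\<rho> x\<bar> \<and> \<bar>\<rho> x\<bar> \<le> r0"
      using scaleR_mem_cone_r R x sphere unfolding refractor1_def K_def by blast
    with setting1_radius_less_norm[OF S P(1)] have "\<rho> x \<noteq> 0" "\<bar>\<rho> x\<bar> < norm P"
      by auto
    moreover have "1 / \<kappa> < x \<bullet> (P /\<^sub>R norm P)"
      using setting1_inner_gt[OF S sphere _ P(1)] x unfolding K_def by blast
    ultimately show ?thesis
      using supports1_iff_closed_range[OF \<kappa> \<open>P \<noteq> 0\<close> x[unfolded K_def] \<open>norm x = 1\<close>]
      unfolding B_def K_def by auto
  qed
  then have "trace_map \<kappa> \<Omega> D \<rho> P = {x \<in> K. \<exists>b\<in>B. (\<forall>y\<in>K. h1 \<kappa> y P b \<le> \<rho> y) \<and> \<rho> x = h1 \<kappa> x P b}"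
    unfolding trace_map_def normal_map_def supports_def K_def using \<kappa> P(1) by auto
  also have "closed \<dots>"
  proof (rule closed_touching_set)
    show "closed K"
      by (simp add: K_def)
    show "compact B"
      unfolding B_def
      by (intro compact_Int_closed compact_Icc closed_INT ballI closed_Collect_le continuous_intros)
    show "continuous_on (K \<times> B) (\<lambda>(x, b). h1 \<kappa> x P b)"
      unfolding case_prod_beta by (intro continuous_intros)
    show "\<exists>g. continuous_on K g \<and> (\<forall>y\<in>K. g y \<le> \<rho> y) \<and> g x = \<rho> x" if x: "x \<in> K" for x
    proof -
      obtain P' b' where "supports1 \<kappa> \<Omega> \<rho> P' b' x"
        using R x unfolding refractor1_def K_def by blast
      then show ?thesis
        unfolding supports1_def K_def
        by (intro exI[of _ "\<lambda>y. h1 \<kappa> y P' b'"] conjI continuous_intros) auto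
    qed
  qed
  finally show ?thesis .
qed

lemma closed_trace_map2:
  fixes \<Omega> D :: "'a::euclidean_space set"
  assumes S: "setting2 \<kappa> \<Omega> D r0" and R: "refractor2 \<kappa> \<Omega> D r0 \<rho>"
    and sphere: "closure \<Omega> \<subseteq> sphere 0 1" and P: "P \<in> closure D"
  shows "closed (trace_map \<kappa> \<Omega> D \<rho> P)"
proof -
  define K where "K = closure \<Omega>"
  define B where "B = {\<kappa> * norm P..norm P}"
  have \<kappa>: "-1 < \<kappa>" "\<kappa> < 0"
    using S by (simp_all add: setting2_def)
  have "supports2 \<kappa> \<Omega> \<rho> P b x \<longleftrightarrow>
      b \<in> B \<and> (\<forall>y\<in>K. - h2 \<kappa> y P b \<le> - \<rho> y) \<and> - \<rho> x = - h2 \<kappa> x P b"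
    if x: "x \<in> K" for x b
  proof -
    have "norm x = 1"
      using x sphere unfolding K_def by auto
    then have "0 < \<bar>\<rho> x\<bar> \<and> \<bar>\<rho> x\<bar> \<le> r0"
      using scaleR_mem_cone_r R x sphere unfolding refractor2_def K_def by blast
    with setting2_radius_less_norm[OF S P] have "\<rho> x \<noteq> 0" "\<bar>\<rho> x\<bar> < norm P"
      by auto
    moreover have "0 \<le> x \<bullet> P"
      using setting2_inner_nonneg[OF S _ P] x unfolding K_def by blast
    ultimately show ?thesis
      using supports2_iff_closed_range[OF \<kappa> \<open>norm x = 1\<close>] unfolding B_def K_def by auto
  qed
  then have "trace_map \<kappa> \<Omega> D \<rho> P =
      {x \<in> K. \<exists>b\<in>B. (\<forall>y\<in>K. - h2 \<kappa> y P b \<le> - \<rho> y) \<and> - \<rho> x = - h2 \<kappa> x P b}"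
    unfolding trace_map_def normal_map_def supports_def K_def using \<kappa> P by auto
  also have "closed \<dots>"
  proof (rule closed_touching_set)
    show "closed K"
      by (simp add: K_def)
    show "compact B"
      by (simp add: B_def)
    show "continuous_on (K \<times> B) (\<lambda>(x, b). - h2 \<kappa> x P b)"
      unfolding case_prod_beta by (intro continuous_intros)
    show "\<exists>g. continuous_on K g \<and> (\<forall>y\<in>K. g y \<le> - \<rho> y) \<and> g x = - \<rho> x" if x: "x \<in> K" for x
    proof -
      obtain P' b' where "supports2 \<kappa> \<Omega> \<rho> P' b' x"
        using R x unfolding refractor2_def K_def by blast
      then show ?thesis
        unfolding supports2_def K_def
        by (intro exI[of _ "\<lambda>y. - h2 \<kappa> y P' b'"] conjI continuous_intros) auto
    qed
  qed
  finally show ?thesis .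
qed

theorem lemma3p5:
  fixes \<kappa> r0 :: real and \<Omega> D :: "'a::euclidean_space set"
    and \<rho> :: "'a \<Rightarrow> real" and P :: 'a
  assumes "sphere_domain \<Omega>" and "sphere_boundary_null \<Omega>"
    and "compact (closure D)" and "0 \<notin> closure D"
    and "ray_unique \<Omega> D r0"
    and "(setting1 \<kappa> \<Omega> D r0 \<and> refractor1 \<kappa> \<Omega> D r0 \<rho>) \<or>
         (setting2 \<kappa> \<Omega> D r0 \<and> refractor2 \<kappa> \<Omega> D r0 \<rho>)"
    and "P \<in> closure D"
  shows "closed (trace_map \<kappa> \<Omega> D \<rho> P) \<and> trace_map \<kappa> \<Omega> D \<rho> P \<subseteq> closure \<Omega>"
proof
  have sphere: "closure \<Omega> \<subseteq> sphere 0 1"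
    using assms(1) by (rule closure_subset_sphere)
  show "closed (trace_map \<kappa> \<Omega> D \<rho> P)"
    using assms(6) closed_trace_map1[OF _ _ sphere assms(7,4)] closed_trace_map2[OF _ _ sphere assms(7)]
    by blast
  show "trace_map \<kappa> \<Omega> D \<rho> P \<subseteq> closure \<Omega>"
    unfolding trace_map_def by blast
qed

end
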